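(* Let $f\in\mathcal G$. Then for every $s\in\mathbb C$ with $0<\Re s<1$ the Mellin integrals $\hat f(s)=\int_0^\infty t^{s-1}f(t)\,dt$ and $\widehat{Pf}(s)=\int_0^\infty x^{s-1}Pf(x)\,dx$ converge absolutely, and $$\zeta(s)\hat f(s)=\widehat{Pf}(s).$$
   Context: A good kernel is a continuously differentiable function $f:[0,\infty)\to\mathbb C$ with $f(x)\to0$ as $x\to\infty$, $f\in L_1(0,\infty)$, and $\int_0^\infty t|f'(t)|\,dt<\infty$; $\mathcal G$ denotes the class of good kernels. For $f\in\mathcal G$, $Pf(x):=\sum_{n=1}^\infty f(nx)-\frac1x\int_0^\infty f(t)\,dt$ (defined a.e.). $\zeta$ is the Riemann zeta function. The Mellin transform of $g$ is $\hat g(s):=\int_0^\infty t^{s-1}g(t)\,dt$. *)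

theory Defs
  imports "HOL-Complex_Analysis.Complex_Analysis"
begin

definition good_kernel :: "(real \<Rightarrow> complex) \<Rightarrow> bool" where
  "good_kernel f \<longleftrightarrow>
     (\<exists>f'. (\<forall>t\<ge>0. (f has_vector_derivative f' t) (at t within {0..}))
         \<and> continuous_on {0..} f'
         \<and> set_integrable lborel {0<..} (\<lambda>t. complex_of_real t * f' t))
     \<and> (f \<longlongrightarrow> 0) at_top
     \<and> set_integrable lborel {0<..} f"

definition Pop :: "(real \<Rightarrow> complex) \<Rightarrow> real \<Rightarrow> complex" where
  "Pop f x = (\<Sum>n. f (real (Suc n) * x))
             - complex_of_real (1 / x) * (LINT t:{0<..}|lborel. f t)"

definition mellin :: "(real \<Rightarrow> complex) \<Rightarrow> complex \<Rightarrow> complex" where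
  "mellin g s = (LINT t:{0<..}|lborel. complex_of_real t powr (s - 1) * g t)"

definition zeta :: "complex \<Rightarrow> complex" where
  "zeta s = (THE z. \<exists>g. g holomorphic_on (- {1})
                     \<and> (\<forall>w. 1 < Re w \<longrightarrow> g w = (\<Sum>n. 1 / of_nat (Suc n) powr w))
                     \<and> g s = z)"

end

theory Submission
  imports Defs
begin

(* Let P_N f(x) = (SUM n<N. f((n+1) x)) - (1/x) * int_0^((N+1) x) f.  Rescaling t = (n+1) x and
   an integration by parts for the running average (1/y) * int_0^y f give
     mellin (P_N f) s = ((SUM n<N. (n+1) powr -s) - (N+1) powr (1-s) / (1-s)) * mellin f s,
   and for 0 < Re s < 1 the bracket tends to zeta s.  On the other hand, x * P_N f(x) is a sum of
   errors of one-point Riemann sums of f minus int_0^x f; bounding these errors by int |f'| and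
   by int t |f'(t)| gives |P_N f(x)| <= C * min 1 (1/x) uniformly in N, and P_N f -> Pf pointwise,
   so dominated convergence lets N -> oo under the Mellin integral.
   Since zeta is defined as an analytic continuation, one has to be constructed: summing the
   binomial expansion of (n+1) powr (1-s) - n powr (1-s) over n >= 2 expresses (s-1) (zeta s - 1)
   through the values of zeta at s+1, s+2, ..., which continues it one strip at a time to the
   whole plane and also yields the limit formula for zeta s used above. *)

section \<open>Analytic continuation of the zeta function\<close>

lemma pochhammer_ge_zero:
  fixes x :: "'a :: linordered_semidom"
  shows "0 \<le> x \<Longrightarrow> 0 \<le> pochhammer x n"
  by (induction n) (auto simp: pochhammer_Suc)

lemma norm_pochhammer_le:
  fixes z :: "'a :: real_normed_field"
  assumes "norm z \<le> r"
  shows "norm (pochhammer z n) \<le> pochhammer r n"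
proof (induction n)
  case (Suc n)
  have "norm (z + of_nat n) \<le> r + of_nat n"
    using norm_triangle_ineq[of z "of_nat n"] assms by (simp add: norm_of_nat)
  moreover have "0 \<le> pochhammer r n"
    using assms norm_ge_zero[of z] by (intro pochhammer_ge_zero) linarith
  ultimately show ?case
    using Suc by (simp add: pochhammer_Suc norm_mult mult_mono)
qed simp

lemma norm_gchoose_le:
  fixes a :: complex
  assumes "norm a \<le> r"
  shows "norm (a gchoose k) \<le> pochhammer r k / fact k"
proof -
  have "norm (a gchoose k) = norm (pochhammer (-a) k) / fact k"
    by (simp add: gbinomial_pochhammer norm_mult norm_divide norm_power)
  also have "\<dots> \<le> pochhammer r k / fact k"
    using norm_pochhammer_le[of "-a" r k] assms by (simp add: divide_right_mono)
  finally show ?thesis .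
qed

lemma summable_pochhammer_geometric:
  fixes r q :: real
  assumes "\<bar>q\<bar> < 1"
  shows "summable (\<lambda>n. pochhammer r n / fact n * q ^ n)"
proof -
  have eq: "((-r) gchoose n) * (-q) ^ n = pochhammer r n / fact n * q ^ n" for n
  proof -
    have "((-r) gchoose n) * (-q) ^ n
            = ((-1) ^ n * (-1) ^ n) * (pochhammer r n / fact n * q ^ n)"
      unfolding gbinomial_pochhammer power_minus[of q] by simp
    also have "(-1::real) ^ n * (-1) ^ n = 1"
      by (simp flip: power_add)
    finally show ?thesis
      by simp
  qed
  have "\<bar>-q\<bar> < 1"
    using assms by simp
  from sums_summable[OF gen_binomial_real[OF this, of "-r"]] show ?thesis
    unfolding eq .
qed

lemma summable_pochhammer_half:
  "summable (\<lambda>j. pochhammer r (j + 2) / fact (j + 2) * (1 / 2 :: real) ^ (j + 2))"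
  using summable_ignore_initial_segment[OF summable_pochhammer_geometric[of "1 / 2" r], of 2]
  by simp

lemma holomorphic_on_suminf_halfplane:
  fixes g :: "nat \<Rightarrow> complex \<Rightarrow> complex"
  assumes hol: "\<And>n. g n holomorphic_on {z. a < Re z}"
    and dom: "\<And>c R. a < c \<Longrightarrow> \<exists>M. summable M \<and>
               (\<forall>\<^sub>F n in sequentially. \<forall>z. c \<le> Re z \<and> norm z \<le> R \<longrightarrow> norm (g n z) \<le> M n)"
  shows "(\<lambda>z. \<Sum>n. g n z) holomorphic_on {z. a < Re z}"
proof (rule holomorphic_uniform_sequence[where f = "\<lambda>N z. \<Sum>n<N. g n z"])
  show "open {z. a < Re z}"
    by (simp add: open_halfspace_Re_gt)
  show "(\<lambda>z. \<Sum>n<N. g n z) holomorphic_on {z. a < Re z}" for N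
    by (intro holomorphic_intros hol)
  fix x assume "x \<in> {z. a < Re z}"
  define d where "d = (Re x - a) / 2"
  have d: "0 < d" "a < Re x - d"
    using \<open>x \<in> {z. a < Re z}\<close> by (simp_all add: d_def field_simps)
  have cball_bounds: "Re x - d \<le> Re z \<and> norm z \<le> norm x + d" if "z \<in> cball x d" for z
    using that abs_Re_le_cmod[of "x - z"] norm_triangle_ineq2[of z x]
    by (auto simp: dist_norm norm_minus_commute)
  obtain M where "summable M" and M: "\<forall>\<^sub>F n in sequentially.
      \<forall>z. Re x - d \<le> Re z \<and> norm z \<le> norm x + d \<longrightarrow> norm (g n z) \<le> M n"
    using dom[OF d(2), of "norm x + d"] by blast
  have "cball x d \<subseteq> {z. a < Re z}"
    using cball_bounds d by force
  moreover have "\<forall>\<^sub>F n in sequentially. \<forall>z\<in>cball x d. norm (g n z) \<le> M n"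
    using M by eventually_elim (use cball_bounds in blast)
  then have "uniform_limit (cball x d) (\<lambda>N z. \<Sum>n<N. g n z) (\<lambda>z. \<Sum>n. g n z) sequentially"
    using \<open>summable M\<close> by (rule Weierstrass_m_test_ev)
  ultimately show "\<exists>d>0. cball x d \<subseteq> {z. a < Re z} \<and>
      uniform_limit (cball x d) (\<lambda>N z. \<Sum>n<N. g n z) (\<lambda>z. \<Sum>n. g n z) sequentially"
    using d by blast
qed

lemma holomorphic_glue_incseq:
  fixes F :: "nat \<Rightarrow> complex \<Rightarrow> complex"
  assumes "incseq S" and S: "\<And>k. open (S k)" "\<And>k. connected (S k)"
    and hol: "\<And>k. F k holomorphic_on S k"
    and U: "open U" "U \<noteq> {}" "U \<subseteq> S 0"
    and agree: "\<And>k z. z \<in> U \<Longrightarrow> F k z = F 0 z"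
  obtains G where "G holomorphic_on (\<Union>k. S k)" and "\<And>k z. z \<in> S k \<Longrightarrow> G z = F k z"
proof
  have F_eq: "F k z = F m z" if "z \<in> S k" "z \<in> S m" for k m z
  proof -
    define j where "j = min k m"
    have "S j = S k \<inter> S m"
      using incseqD[OF \<open>incseq S\<close>, of k m] incseqD[OF \<open>incseq S\<close>, of m k]
      by (auto simp: j_def min_def)
    moreover have "U \<subseteq> S j"
      using U(3) incseqD[OF \<open>incseq S\<close>, of 0 j] by blast
    moreover have "F k w = F m w" if "w \<in> U" for w
      using agree[of w k] agree[of w m] that by simp
    ultimately show ?thesis
      using analytic_continuation_open[OF U(1) S(1) U(2) S(2), of j "F k" "F m" z] hol that
      by (auto intro: holomorphic_on_subset)
  qed
  define G where "G z = F (LEAST k. z \<in> S k) z" for z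
  show G_eq: "G z = F k z" if "z \<in> S k" for k z
    unfolding G_def using F_eq LeastI[of "\<lambda>k. z \<in> S k"] that by blast
  show "G holomorphic_on (\<Union>k. S k)"
  proof (rule holomorphic_on_UN_open)
    show "G holomorphic_on S k" for k
      using hol[of k] by (rule holomorphic_transform) (simp add: G_eq)
  qed (use S in simp)
qed

lemma sums_swap_of_product_bound:
  fixes b :: "nat \<Rightarrow> nat \<Rightarrow> 'a :: banach"
  assumes bound: "\<And>m n. norm (b m n) \<le> u m * v n"
    and u: "summable u" "\<And>m. 0 \<le> u m" and v: "summable v" "\<And>n. 0 \<le> v n"
  shows "(\<lambda>m. \<Sum>n. b m n) sums (\<Sum>n. \<Sum>m. b m n)"
proof -
  have infsum_eq: "infsum g UNIV = suminf g"
    if "summable (\<lambda>n. norm (g n))" for g :: "nat \<Rightarrow> 'a"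
    using infsumI[OF norm_summable_imp_has_sum[OF that
            summable_sums[OF summable_norm_cancel[OF that]]]] .
  have row: "summable (\<lambda>n. norm (b m n))" for m
    by (rule summable_comparison_test'[OF summable_mult[OF v(1), of "u m"]]) (simp add: bound)
  have col: "summable (\<lambda>m. norm (b m n))" for n
    by (rule summable_comparison_test'[OF summable_mult2[OF u(1), of "v n"]]) (simp add: bound)
  have "norm (\<Sum>n. b m n) \<le> u m * suminf v" for m
    using norm_suminf_le[OF bound summable_mult[OF v(1)]] by (simp add: suminf_mult[OF v(1)])
  then have row_sum: "summable (\<lambda>m. norm (\<Sum>n. b m n))"
    by (intro summable_comparison_test'[OF summable_mult2[OF u(1), of "suminf v"]]) simp
  have "norm (\<Sum>m. b m n) \<le> suminf u * v n" for n
    using norm_suminf_le[OF bound summable_mult2[OF u(1)]] by (simp add: suminf_mult2[OF u(1)])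
  then have col_sum: "summable (\<lambda>n. norm (\<Sum>m. b m n))"
    by (intro summable_comparison_test'[OF summable_mult[OF v(1), of "suminf u"]]) simp
  have "(\<lambda>p. u (fst p) * v (snd p)) summable_on UNIV \<times> UNIV"
  proof (rule summable_on_SigmaI[where g = "\<lambda>m. u m * suminf v"])
    show "((\<lambda>n. u (fst (m, n)) * v (snd (m, n))) has_sum u m * suminf v) UNIV" for m
      using v by (simp add: has_sum_cmult_right norm_summable_imp_has_sum summable_sums)
    show "(\<lambda>m. u m * suminf v) summable_on UNIV"
      using u v
      by (intro summable_nonneg_imp_summable_on summable_mult2 mult_nonneg_nonneg suminf_nonneg)
    show "0 \<le> u (fst (m, n)) * v (snd (m, n))" for m n
      using u v by simp
  qed
  then have "(\<lambda>p. norm (case p of (m, n) \<Rightarrow> b m n)) summable_on UNIV \<times> UNIV"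
    by (rule Infinite_Sum.abs_summable_on_comparison_test') (auto simp: bound)
  then have "infsum (\<lambda>m. infsum (b m) UNIV) UNIV
               = infsum (\<lambda>n. infsum (\<lambda>m. b m n) UNIV) UNIV"
    by (rule infsum_swap_banach[OF abs_summable_summable])
  then have "(\<Sum>m. \<Sum>n. b m n) = (\<Sum>n. \<Sum>m. b m n)"
    by (simp add: infsum_eq row col row_sum col_sum)
  with row_sum show ?thesis
    by (simp add: sums_iff summable_norm_cancel)
qed

lemma norm_of_nat_powr: "norm ((of_nat n :: complex) powr z) = real n powr Re z"
  by (simp add: norm_powr_real_powr)

lemma powr_le_powr_mult_two_powr:
  fixes x \<mu> \<nu> :: real
  assumes "2 \<le> x" "\<mu> \<le> \<nu>"
  shows "x powr (- \<nu>) \<le> x powr (- \<mu>) * 2 powr (\<mu> - \<nu>)"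
proof -
  have "x powr (- \<nu>) = x powr (- \<mu>) * x powr (\<mu> - \<nu>)"
    by (simp flip: powr_add)
  also have "\<dots> \<le> x powr (- \<mu>) * 2 powr (\<mu> - \<nu>)"
    using assms by (intro mult_left_mono powr_mono2') auto
  finally show ?thesis .
qed

lemma summable_shifted_powr: "1 < \<sigma> \<Longrightarrow> summable (\<lambda>n. real (n + 2) powr (- \<sigma>))"
  using summable_ignore_initial_segment[of "\<lambda>n. real n powr (- \<sigma>)" 2]
  by (simp add: summable_real_powr_iff)

definition zeta_tail :: "complex \<Rightarrow> complex" where
  "zeta_tail t = (\<Sum>n. of_nat (n + 2) powr (- t))"

(* The factor t - 1 removes the pole at 1: the continuation of zeta_tail_reg is entire. *)
definition zeta_tail_reg :: "complex \<Rightarrow> complex" where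
  "zeta_tail_reg t = (t - 1) * zeta_tail t"

lemma zeta_tail_sums:
  assumes "1 < Re t"
  shows "summable (\<lambda>n. norm ((of_nat (n + 2) :: complex) powr (- t)))"
    and "(\<lambda>n. of_nat (n + 2) powr (- t)) sums zeta_tail t"
proof -
  show norm_summable: "summable (\<lambda>n. norm ((of_nat (n + 2) :: complex) powr (- t)))"
    unfolding norm_of_nat_powr using summable_shifted_powr[OF assms] by simp
  show "(\<lambda>n. of_nat (n + 2) powr (- t)) sums zeta_tail t"
    unfolding zeta_tail_def using summable_norm_cancel[OF norm_summable] by (rule summable_sums)
qed

lemma norm_zeta_tail_le:
  assumes "2 \<le> Re t"
  shows "norm (zeta_tail t) \<le> (\<Sum>n. real (n + 2) powr (- 2)) * 2 powr (2 - Re t)"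
proof -
  have "norm (zeta_tail t) \<le> (\<Sum>n. real (n + 2) powr (- Re t))"
    using summable_norm[OF zeta_tail_sums(1)] assms
    unfolding zeta_tail_def norm_of_nat_powr by simp
  also have "\<dots> \<le> (\<Sum>n. real (n + 2) powr (- 2) * 2 powr (2 - Re t))"
    using assms
    by (intro suminf_le powr_le_powr_mult_two_powr summable_shifted_powr summable_mult2) auto
  also have "\<dots> = (\<Sum>n. real (n + 2) powr (- 2)) * 2 powr (2 - Re t)"
    by (intro suminf_mult2[symmetric] summable_shifted_powr) simp
  finally show ?thesis .
qed

lemma zeta_tail_holomorphic: "zeta_tail holomorphic_on {z. 1 < Re z}"
proof -
  have "(\<lambda>z. \<Sum>n. of_nat (n + 2) powr (- z)) holomorphic_on {z. 1 < Re z}"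
  proof (rule holomorphic_on_suminf_halfplane)
    fix c R :: real assume "1 < c"
    have "norm ((of_nat (n + 2) :: complex) powr (- z)) \<le> real (n + 2) powr (- c)"
      if "c \<le> Re z" for n z
      unfolding norm_of_nat_powr using that by (intro powr_mono) auto
    then show "\<exists>M. summable M \<and> (\<forall>\<^sub>F n in sequentially. \<forall>z. c \<le> Re z \<and> norm z \<le> R \<longrightarrow>
                 norm ((of_nat (n + 2) :: complex) powr (- z)) \<le> M n)"
      using summable_shifted_powr[OF \<open>1 < c\<close>] by (auto intro!: always_eventually)
  qed (intro holomorphic_intros)
  then show ?thesis
    unfolding zeta_tail_def[abs_def] .
qed

definition shift_coeff :: "nat \<Rightarrow> complex \<Rightarrow> complex" where
  "shift_coeff j s = (-1) ^ j * pochhammer (s - 1) (j + 1) / fact (j + 2)"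

(* Summing the binomial expansion of (n + 1) powr (1 - s) - n powr (1 - s) over n >= 2 gives
     (s - 1) * zeta_tail s
       = 2 powr (1 - s) + (SUM k>=2. ((1 - s) gchoose k) * zeta_tail (s + k - 1)),
   whose terms are rewritten by shift_coeff_mult_zeta_tail_reg (k = j + 2).  The right-hand
   side only uses values further to the right, so continuation_step extends zeta_tail_reg from
   a half-plane by one unit to the left. *)
definition continuation_step :: "(complex \<Rightarrow> complex) \<Rightarrow> complex \<Rightarrow> complex" where
  "continuation_step F s = 2 powr (1 - s) + (\<Sum>j. shift_coeff j s * F (s + of_nat (j + 1)))"

lemma shift_coeff_mult_zeta_tail_reg:
  "shift_coeff j s * zeta_tail_reg (s + of_nat (j + 1))
     = ((1 - s) gchoose (j + 2)) * zeta_tail (s + of_nat (j + 1))"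
proof -
  have "(1 - s) gchoose (j + 2)
          = (-1) ^ j * (pochhammer (s - 1) (j + 1) * (s + of_nat j)) / fact (j + 2)"
    using pochhammer_Suc[of "s - 1" "j + 1"] by (simp add: gbinomial_pochhammer)
  then show ?thesis
    by (simp add: shift_coeff_def zeta_tail_reg_def)
qed

lemma norm_binomial_zeta_tail_le:
  assumes "c \<le> Re s" "1 \<le> c + real j" "norm (s - 1) \<le> r"
  shows "norm (((1 - s) gchoose (j + 2)) * zeta_tail (s + of_nat (j + 1)))
           \<le> (\<Sum>n. real (n + 2) powr (- 2)) * 2 powr (3 - c)
               * (pochhammer r (j + 2) / fact (j + 2) * (1 / 2) ^ (j + 2))"
proof -
  define K where "K = (\<Sum>n. real (n + 2) powr (- 2))"
  have "0 \<le> r"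
    using assms(3) norm_ge_zero order_trans by blast
  have binomial: "norm ((1 - s) gchoose (j + 2)) \<le> pochhammer r (j + 2) / fact (j + 2)"
    using assms(3) by (intro norm_gchoose_le) (simp add: norm_minus_commute)
  have tail: "norm (zeta_tail (s + of_nat (j + 1))) \<le> K * 2 powr (2 - (c + real j + 1))"
  proof -
    have "norm (zeta_tail (s + of_nat (j + 1))) \<le> K * 2 powr (2 - (Re s + real j + 1))"
      using norm_zeta_tail_le[of "s + of_nat (j + 1)"] assms by (simp add: K_def)
    also have "\<dots> \<le> K * 2 powr (2 - (c + real j + 1))"
      using assms(1) unfolding K_def
      by (intro mult_left_mono suminf_nonneg summable_shifted_powr) auto
    finally show ?thesis .
  qed
  have "norm (((1 - s) gchoose (j + 2)) * zeta_tail (s + of_nat (j + 1)))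
          \<le> pochhammer r (j + 2) / fact (j + 2) * (K * 2 powr (2 - (c + real j + 1)))"
    unfolding norm_mult using \<open>0 \<le> r\<close>
    by (intro mult_mono binomial tail) (auto intro!: divide_nonneg_pos pochhammer_ge_zero)
  also have "2 powr (2 - (c + real j + 1)) = 2 powr (3 - c) * (1 / 2) ^ (j + 2)"
    by (simp add: powr_diff powr_add powr_realpow power_one_over field_simps)
  finally show ?thesis
    by (simp add: K_def mult_ac)
qed

lemma continuation_step_holomorphic:
  assumes hol: "F holomorphic_on {z. a < Re z}"
    and F: "\<And>t. 1 < Re t \<Longrightarrow> F t = zeta_tail_reg t"
  shows "continuation_step F holomorphic_on {z. a - 1 < Re z}"
proof -
  have "(\<lambda>s. \<Sum>j. shift_coeff j s * F (s + of_nat (j + 1))) holomorphic_on {z. a - 1 < Re z}"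
  proof (rule holomorphic_on_suminf_halfplane)
    have "(\<lambda>s. F (s + of_nat (j + 1))) holomorphic_on {z. a - 1 < Re z}" for j
      by (rule holomorphic_on_compose_gen[OF _ hol, unfolded o_def])
         (auto intro!: holomorphic_intros)
    then show "(\<lambda>s. shift_coeff j s * F (s + of_nat (j + 1))) holomorphic_on {z. a - 1 < Re z}"
      for j
      unfolding shift_coeff_def by (intro holomorphic_intros) auto
  next
    fix c R :: real
    define M where "M j = (\<Sum>n. real (n + 2) powr (- 2)) * 2 powr (3 - c)
                            * (pochhammer (R + 1) (j + 2) / fact (j + 2) * (1 / 2) ^ (j + 2))" for j
    have "summable M"
      unfolding M_def by (intro summable_mult summable_pochhammer_half)
    moreover have "norm (shift_coeff j s * F (s + of_nat (j + 1))) \<le> M j"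
      if "nat \<lceil>1 - c\<rceil> \<le> j" "c \<le> Re s" "norm s \<le> R" for j s
    proof -
      have "F (s + of_nat (j + 1)) = zeta_tail_reg (s + of_nat (j + 1))"
        using that by (intro F) auto
      then have "norm (shift_coeff j s * F (s + of_nat (j + 1)))
                   = norm (((1 - s) gchoose (j + 2)) * zeta_tail (s + of_nat (j + 1)))"
        by (simp only: shift_coeff_mult_zeta_tail_reg)
      also have "\<dots> \<le> M j"
        unfolding M_def using that norm_triangle_ineq4[of s 1]
        by (intro norm_binomial_zeta_tail_le) auto
      finally show ?thesis .
    qed
    ultimately show "\<exists>M. summable M \<and> (\<forall>\<^sub>F j in sequentially. \<forall>s. c \<le> Re s \<and> norm s \<le> R \<longrightarrow>
                 norm (shift_coeff j s * F (s + of_nat (j + 1))) \<le> M j)"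
      unfolding eventually_sequentially by blast
  qed
  then show ?thesis
    unfolding continuation_step_def[abs_def] by (intro holomorphic_intros)
qed

definition binomial_remainder :: "complex \<Rightarrow> nat \<Rightarrow> complex" where
  "binomial_remainder s n =
     of_nat (n + 3) powr (1 - s) - of_nat (n + 2) powr (1 - s)
       - (1 - s) * of_nat (n + 2) powr (- s)"

lemma binomial_remainder_sums:
  "(\<lambda>j. ((1 - s) gchoose (j + 2)) * of_nat (n + 2) powr (- (s + of_nat (j + 1))))
     sums binomial_remainder s n"
proof -
  have "(\<lambda>k. ((1 - s) gchoose k) * of_real (real (n + 2)) powr (1 - s - of_nat k) * of_real 1 ^ k)
          sums of_real (real (n + 2) + 1) powr (1 - s)"
    by (rule gen_binomial_complex'') simp
  then have "(\<lambda>k. ((1 - s) gchoose k) * of_nat (n + 2) powr (1 - s - of_nat k))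
               sums of_nat (n + 3) powr (1 - s)"
    by (simp add: add_ac)
  from sums_split_initial_segment[OF this, of 2] show ?thesis
    by (simp add: binomial_remainder_def numeral_2_eq_2 algebra_simps)
qed

lemma sum_binomial_remainder:
  "(\<Sum>n<N. binomial_remainder s n) =
     of_nat (N + 2) powr (1 - s) - 2 powr (1 - s) - (1 - s) * (\<Sum>n<N. of_nat (n + 2) powr (- s))"
  by (induction N) (simp_all add: binomial_remainder_def algebra_simps)

lemma binomial_remainder_series:
  assumes "0 < Re s"
  shows "binomial_remainder s sums (\<Sum>j. shift_coeff j s * zeta_tail_reg (s + of_nat (j + 1)))"
proof -
  define b where
    "b n j = ((1 - s) gchoose (j + 2)) * of_nat (n + 2) powr (- (s + of_nat (j + 1)))" for n j
  define u where "u n = 4 * real (n + 2) powr (- (1 + Re s))" for n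
  define v where
    "v j = pochhammer (norm (1 - s)) (j + 2) / fact (j + 2) * (1 / 2 :: real) ^ (j + 2)" for j
  have "norm (b n j) \<le> u n * v j" for n j
  proof -
    have "real (n + 2) powr (- (Re s + real j + 1))
            \<le> real (n + 2) powr (- (1 + Re s)) * 2 powr (- real j)"
      using powr_le_powr_mult_two_powr[of "real (n + 2)" "1 + Re s" "Re s + real j + 1"] by simp
    also have "2 powr (- real j) = 4 * (1 / 2) ^ (j + 2)"
      by (simp add: powr_minus powr_realpow power_one_over field_simps)
    finally have "norm ((of_nat (n + 2) :: complex) powr (- (s + of_nat (j + 1))))
                    \<le> u n * (1 / 2) ^ (j + 2)"
      unfolding norm_of_nat_powr u_def by (simp add: algebra_simps)
    then have "norm (b n j)
                 \<le> pochhammer (norm (1 - s)) (j + 2) / fact (j + 2) * (u n * (1 / 2) ^ (j + 2))"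
      unfolding b_def norm_mult
      by (rule mult_mono[OF norm_gchoose_le[OF order.refl]]) (simp_all add: pochhammer_ge_zero)
    then show ?thesis
      unfolding v_def by (simp only: mult_ac)
  qed
  moreover have "summable u"
    unfolding u_def using assms by (intro summable_mult summable_shifted_powr) simp
  moreover have "0 \<le> u n" for n
    by (simp add: u_def)
  moreover have "summable v"
    unfolding v_def by (rule summable_pochhammer_half)
  moreover have "0 \<le> v j" for j
    by (simp add: v_def pochhammer_ge_zero)
  ultimately have "(\<lambda>n. \<Sum>j. b n j) sums (\<Sum>j. \<Sum>n. b n j)"
    by (rule sums_swap_of_product_bound)
  moreover have "(\<Sum>j. b n j) = binomial_remainder s n" for n
    unfolding b_def using binomial_remainder_sums by (rule sums_unique[symmetric])
  moreover have "(\<Sum>n. b n j) = shift_coeff j s * zeta_tail_reg (s + of_nat (j + 1))" for j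
  proof -
    have "1 < Re (s + of_nat (j + 1))"
      using assms by simp
    from sums_mult[OF zeta_tail_sums(2)[OF this], of "(1 - s) gchoose (j + 2)"] show ?thesis
      unfolding b_def shift_coeff_mult_zeta_tail_reg by (simp add: sums_iff)
  qed
  ultimately show ?thesis
    by simp
qed

lemma tendsto_zeta_tail_partial_sums:
  assumes "0 < Re s" "s \<noteq> 1"
  shows "(\<lambda>N. (\<Sum>n<N. of_nat (n + 2) powr (- s)) - of_nat (N + 2) powr (1 - s) / (1 - s))
           \<longlonglongrightarrow> continuation_step zeta_tail_reg s / (s - 1)"
proof -
  have "1 - s \<noteq> 0"
    using assms by simp
  have "(\<Sum>n<N. of_nat (n + 2) powr (- s)) - of_nat (N + 2) powr (1 - s) / (1 - s)
          = (2 powr (1 - s) + (\<Sum>n<N. binomial_remainder s n)) / (s - 1)" for N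
    using \<open>1 - s \<noteq> 0\<close> unfolding sum_binomial_remainder by (simp add: field_simps)
  moreover have "(\<lambda>N. (2 powr (1 - s) + (\<Sum>n<N. binomial_remainder s n)) / (s - 1))
                   \<longlonglongrightarrow> continuation_step zeta_tail_reg s / (s - 1)"
    unfolding continuation_step_def using binomial_remainder_series[OF assms(1)] assms(2)
    by (intro tendsto_intros) (simp_all add: sums_def)
  ultimately show ?thesis
    by simp
qed

lemma continuation_step_zeta_tail_reg:
  assumes "1 < Re s"
  shows "continuation_step zeta_tail_reg s = zeta_tail_reg s"
proof -
  have "s \<noteq> 1"
    using assms by auto
  have "(\<lambda>N. (of_nat (N + 2) :: complex) powr (1 - s)) \<longlonglongrightarrow> 0"
    using assms by (intro tendsto_neg_powr_complex_of_nat filterlim_add_const_nat_at_top) auto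
  then have "(\<lambda>N. (\<Sum>n<N. of_nat (n + 2) powr (- s)) - of_nat (N + 2) powr (1 - s) / (1 - s))
               \<longlonglongrightarrow> zeta_tail s - 0 / (1 - s)"
    using zeta_tail_sums(2)[OF assms] \<open>s \<noteq> 1\<close>
    by (intro tendsto_intros) (simp_all add: sums_def)
  with tendsto_zeta_tail_partial_sums[of s] assms \<open>s \<noteq> 1\<close>
  have "zeta_tail s = continuation_step zeta_tail_reg s / (s - 1)"
    by (auto intro: LIMSEQ_unique)
  with \<open>s \<noteq> 1\<close> show ?thesis
    by (simp add: zeta_tail_reg_def)
qed

lemma continuation_step_eq_zeta_tail_reg:
  assumes "\<And>t. 1 < Re t \<Longrightarrow> F t = zeta_tail_reg t" and "1 < Re s"
  shows "continuation_step F s = zeta_tail_reg s"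
  using assms continuation_step_zeta_tail_reg[of s] by (simp add: continuation_step_def)

lemma funpow_continuation_step:
  "(continuation_step ^^ k) zeta_tail_reg holomorphic_on {z. 1 - real k < Re z}
   \<and> (\<forall>t. 1 < Re t \<longrightarrow> (continuation_step ^^ k) zeta_tail_reg t = zeta_tail_reg t)"
proof (induction k)
  case 0
  have "zeta_tail_reg holomorphic_on {z. 1 < Re z}"
    unfolding zeta_tail_reg_def[abs_def] by (intro holomorphic_intros zeta_tail_holomorphic)
  then show ?case
    by simp
next
  case (Suc k)
  then have "continuation_step ((continuation_step ^^ k) zeta_tail_reg)
               holomorphic_on {z. 1 - real k - 1 < Re z}"
    by (intro continuation_step_holomorphic) auto
  with Suc show ?case
    by (auto simp: algebra_simps intro: continuation_step_eq_zeta_tail_reg)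
qed

lemma zeta_tail_reg_extension:
  obtains W where "W holomorphic_on UNIV"
    and "\<And>k z. 1 - real k < Re z \<Longrightarrow> W z = (continuation_step ^^ k) zeta_tail_reg z"
proof -
  let ?S = "\<lambda>k. {z. 1 - real k < Re z}"
  have "incseq ?S"
    by (auto simp: incseq_def)
  moreover have "open (?S k)" "connected (?S k)" for k
    by (simp_all add: open_halfspace_Re_gt convex_connected convex_halfspace_Re_gt)
  moreover have "open {z. 1 < Re z}" "{z. 1 < Re z} \<noteq> {}" "{z. 1 < Re z} \<subseteq> ?S 0"
    by (auto simp: open_halfspace_Re_gt intro!: exI[of _ 2])
  ultimately obtain W where "W holomorphic_on (\<Union>k. ?S k)"
    and "\<And>k z. z \<in> ?S k \<Longrightarrow> W z = (continuation_step ^^ k) zeta_tail_reg z"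
    using holomorphic_glue_incseq[of ?S "\<lambda>k. (continuation_step ^^ k) zeta_tail_reg"
            "{z. 1 < Re z}"] funpow_continuation_step
    by auto
  moreover have "(\<Union>k. ?S k) = UNIV"
  proof -
    have "1 - real (nat \<lceil>1 - Re z\<rceil> + 1) < Re z" for z
      by linarith
    then show ?thesis
      by blast
  qed
  ultimately show ?thesis
    using that by simp
qed

lemma zeta_eqI:
  assumes hol: "g holomorphic_on - {1}"
    and dirichlet: "\<And>w. 1 < Re w \<Longrightarrow> g w = (\<Sum>n. 1 / of_nat (Suc n) powr w)"
    and "s \<noteq> 1"
  shows "zeta s = g s"
  unfolding zeta_def
proof (rule the_equality)
  show "\<exists>g'. g' holomorphic_on - {1}
          \<and> (\<forall>w. 1 < Re w \<longrightarrow> g' w = (\<Sum>n. 1 / of_nat (Suc n) powr w)) \<and> g' s = g s"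
    using hol dirichlet by blast
next
  fix z assume "\<exists>g'. g' holomorphic_on - {1}
                  \<and> (\<forall>w. 1 < Re w \<longrightarrow> g' w = (\<Sum>n. 1 / of_nat (Suc n) powr w)) \<and> g' s = z"
  then obtain g' where "g' holomorphic_on - {1}" "\<And>w. 1 < Re w \<Longrightarrow> g' w = g w" "g' s = z"
    using dirichlet by metis
  moreover have "open {w. 1 < Re w}" "{w. 1 < Re w} \<noteq> {}" "{w. 1 < Re w} \<subseteq> - {1}"
    by (auto simp: open_halfspace_Re_gt intro!: exI[of _ 2])
  ultimately show "z = g s"
    using analytic_continuation_open[of "{w. 1 < Re w}" "- {1}" g' g s] hol \<open>s \<noteq> 1\<close>
    by (auto simp: connected_punctured_universe)
qed

lemma dirichlet_series_eq_zeta_tail: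
  assumes "1 < Re w"
  shows "(\<Sum>n. 1 / of_nat (Suc n) powr w) = 1 + zeta_tail w"
proof -
  have "(\<lambda>n. 1 / of_nat (Suc (Suc n)) powr w) sums zeta_tail w"
    using zeta_tail_sums(2)[OF assms] by (simp add: powr_minus_divide add_ac)
  from sums_Suc[of "\<lambda>n. 1 / of_nat (Suc n) powr w", OF this] show ?thesis
    by (simp add: sums_iff add_ac)
qed

lemma zeta_eq_continuation_step:
  assumes "0 < Re s" "s \<noteq> 1"
  shows "zeta s = 1 + continuation_step zeta_tail_reg s / (s - 1)"
proof -
  obtain W where W: "W holomorphic_on UNIV"
    and W_eq: "\<And>k z. 1 - real k < Re z \<Longrightarrow> W z = (continuation_step ^^ k) zeta_tail_reg z"
    using zeta_tail_reg_extension by blast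
  have "zeta s = 1 + W s / (s - 1)"
  proof (rule zeta_eqI[OF _ _ \<open>s \<noteq> 1\<close>])
    show "(\<lambda>z. 1 + W z / (z - 1)) holomorphic_on - {1}"
      using W by (intro holomorphic_intros) (auto intro: holomorphic_on_subset)
    fix w :: complex assume "1 < Re w"
    then show "1 + W w / (w - 1) = (\<Sum>n. 1 / of_nat (Suc n) powr w)"
      using W_eq[of 0 w] dirichlet_series_eq_zeta_tail[of w] by (auto simp: zeta_tail_reg_def)
  qed
  also have "W s = continuation_step zeta_tail_reg s"
    using W_eq[of 1 s] assms(1) by simp
  finally show ?thesis .
qed

lemma tendsto_zeta:
  assumes "0 < Re s" "s \<noteq> 1"
  shows "(\<lambda>N. (\<Sum>n<N. of_nat (Suc n) powr (- s)) - of_nat (N + 1) powr (1 - s) / (1 - s))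
           \<longlonglongrightarrow> zeta s"
proof -
  have lim: "(\<lambda>N. 1 + ((\<Sum>n<N. of_nat (n + 2) powr (- s)) - of_nat (N + 2) powr (1 - s) / (1 - s)))
               \<longlonglongrightarrow> zeta s"
    unfolding zeta_eq_continuation_step[OF assms]
    by (intro tendsto_intros tendsto_zeta_tail_partial_sums assms)
  have eq: "(\<Sum>n<Suc N. of_nat (Suc n) powr (- s)) - of_nat (Suc N + 1) powr (1 - s) / (1 - s)
      = 1 + ((\<Sum>n<N. of_nat (n + 2) powr (- s)) - of_nat (N + 2) powr (1 - s) / (1 - s))" for N
    unfolding sum.lessThan_Suc_shift add_2_eq_Suc' by simp
  show ?thesis
    by (rule LIMSEQ_imp_Suc) (unfold eq, rule lim)
qed

section \<open>Mellin transforms\<close>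

lemma set_integrable_of_integrable_on_nonneg:
  fixes h :: "real \<Rightarrow> real"
  assumes "h integrable_on S" "\<And>x. x \<in> S \<Longrightarrow> 0 \<le> h x"
    and "S \<in> sets borel" "continuous_on S h"
  shows "set_integrable lborel S h"
proof -
  have "integrable lebesgue (\<lambda>x. indicator S x *\<^sub>R h x)"
    using nonnegative_absolutely_integrable_1[OF assms(1,2)] by (simp add: set_integrable_def)
  moreover have "(\<lambda>x. indicator S x *\<^sub>R h x) \<in> borel_measurable lborel"
    using borel_measurable_continuous_on_indicator[OF assms(3,4)] by simp
  ultimately show ?thesis
    unfolding set_integrable_def using integrable_completion by blast
qed

lemma set_integrable_powr_min:
  fixes \<sigma> :: real
  assumes "0 < \<sigma>" "\<sigma> < 1"
  shows "set_integrable lborel {0<..} (\<lambda>y. y powr (\<sigma> - 1) * min 1 (1 / y))"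
proof -
  have "set_integrable lborel {0<..1} (\<lambda>y. y powr (\<sigma> - 1))"
    by (rule set_integrable_of_integrable_on_nonneg[OF integrable_on_powr_from_0'])
       (use assms in \<open>auto intro!: continuous_intros\<close>)
  then have small: "set_integrable lborel {0<..1} (\<lambda>y. y powr (\<sigma> - 1) * min 1 (1 / y))"
    by (rule set_integrable_cong[THEN iffD1, rotated -1]) (auto simp: min_def field_simps)
  have "(\<lambda>y. y powr (\<sigma> - 2)) integrable_on {1..}"
    using has_integral_powr_to_inf[of "\<sigma> - 2" 1] assms unfolding integrable_on_def by auto
  then have "(\<lambda>y. y powr (\<sigma> - 2)) integrable_on {1<..}"
    by (rule integrable_spike_set) (auto intro: negligible_subset[of "{1}"])
  then have "set_integrable lborel {1<..} (\<lambda>y. y powr (\<sigma> - 2))"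
    by (rule set_integrable_of_integrable_on_nonneg) (auto intro!: continuous_intros)
  then have large: "set_integrable lborel {1<..} (\<lambda>y. y powr (\<sigma> - 1) * min 1 (1 / y))"
    by (rule set_integrable_cong[THEN iffD1, rotated -1])
       (auto simp: min_def powr_diff powr_minus_divide field_simps power2_eq_square)
  have "{0<..} = {0<..1} \<union> {1::real<..}"
    by auto
  with set_integrable_Un[OF small large] show ?thesis
    by simp
qed

definition mellin_integrable :: "(real \<Rightarrow> complex) \<Rightarrow> complex \<Rightarrow> bool" where
  "mellin_integrable g s \<longleftrightarrow>
     set_integrable lborel {0<..} (\<lambda>t. complex_of_real t powr (s - 1) * g t)"

lemma norm_of_real_powr: "0 < t \<Longrightarrow> norm (complex_of_real t powr z) = t powr Re z"
  by (simp add: norm_powr_real_powr)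

lemma continuous_on_of_real_powr: "continuous_on {0<..} (\<lambda>t. complex_of_real t powr z)"
  by (intro continuous_at_imp_continuous_on ballI isCont_powr_complex continuous_intros)
     (auto simp: complex_nonpos_Reals_iff)

lemma mellin_dominated_convergence:
  fixes g :: "nat \<Rightarrow> real \<Rightarrow> complex"
  assumes s: "0 < Re s" "Re s < 1"
    and cont: "\<And>N. continuous_on {0<..} (g N)"
    and bound: "\<And>N x. 0 < x \<Longrightarrow> norm (g N x) \<le> C * min 1 (1 / x)"
    and lim: "\<And>x. 0 < x \<Longrightarrow> (\<lambda>N. g N x) \<longlonglongrightarrow> h x"
  shows "mellin_integrable h s" and "(\<lambda>N. mellin (g N) s) \<longlonglongrightarrow> mellin h s"
proof -
  define G where "G N x = indicator {0<..} x *\<^sub>R (complex_of_real x powr (s - 1) * g N x)" for N x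
  define H where "H x = indicator {0<..} x *\<^sub>R (complex_of_real x powr (s - 1) * h x)" for x
  define w where "w x = indicator {0<..} x *\<^sub>R (C * (x powr (Re s - 1) * min 1 (1 / x)))" for x
  have G_meas: "G N \<in> borel_measurable lborel" for N
    unfolding G_def measurable_lborel2
    by (intro borel_measurable_continuous_on_indicator continuous_intros continuous_on_of_real_powr
              cont) auto
  have G_lim: "(\<lambda>N. G N x) \<longlonglongrightarrow> H x" for x
    using lim[of x] by (cases "0 < x") (auto simp: G_def H_def intro!: tendsto_intros)
  have w: "integrable lborel w"
    using set_integrable_mult_right[OF set_integrable_powr_min[OF s], of C]
    unfolding w_def[abs_def] by (simp add: set_integrable_def)
  have G_le: "norm (G N x) \<le> w x" for N x
  proof (cases "0 < x")
    case True
    then have "x powr (Re s - 1) * norm (g N x) \<le> x powr (Re s - 1) * (C * min 1 (1 / x))"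
      by (intro mult_left_mono bound) auto
    with True show ?thesis
      by (simp add: G_def w_def norm_mult norm_of_real_powr mult_ac)
  qed (simp add: G_def w_def)
  have H_meas: "H \<in> borel_measurable lborel"
    using G_meas G_lim by (rule borel_measurable_LIMSEQ_metric)
  have "integrable lborel H"
    using H_meas G_meas w
    by (rule integrable_dominated_convergence[where s = G]) (simp_all add: G_lim G_le)
  then show "mellin_integrable h s"
    unfolding mellin_integrable_def set_integrable_def H_def .
  have "(\<lambda>N. integral\<^sup>L lborel (G N)) \<longlonglongrightarrow> integral\<^sup>L lborel H"
    using H_meas G_meas w
    by (rule integral_dominated_convergence[where s = G]) (simp_all add: G_lim G_le)
  then show "(\<lambda>N. mellin (g N) s) \<longlonglongrightarrow> mellin h s"
    unfolding mellin_def set_lebesgue_integral_def G_def H_def .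
qed

lemma mellin_integrable_of_bound:
  assumes "0 < Re s" "Re s < 1" "continuous_on {0<..} g"
    and "\<And>x. 0 < x \<Longrightarrow> norm (g x) \<le> C * min 1 (1 / x)"
  shows "mellin_integrable g s"
  using mellin_dominated_convergence(1)[of s "\<lambda>_. g" C g] assms by simp

lemma mellin_scale:
  fixes g :: "real \<Rightarrow> complex"
  assumes "0 < c"
  shows "mellin_integrable (\<lambda>x. g (c * x)) s \<longleftrightarrow> mellin_integrable g s"
    and "mellin (\<lambda>x. g (c * x)) s = complex_of_real c powr (- s) * mellin g s"
proof -
  define F where "F y = indicator {0<..} y *\<^sub>R (complex_of_real y powr (s - 1) * g y)" for y
  define H where "H x = indicator {0<..} x *\<^sub>R (complex_of_real x powr (s - 1) * g (c * x))" for x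
  define k where "k = complex_of_real c powr (s - 1)"
  have "k \<noteq> 0"
    using assms by (simp add: k_def)
  have FH: "F (c * x) = k * H x" for x
  proof (cases "0 < x")
    case True
    then have "complex_of_real (c * x) powr (s - 1) = k * complex_of_real x powr (s - 1)"
      using assms unfolding k_def of_real_mult by (subst powr_times_real) auto
    with True assms show ?thesis
      by (simp add: F_def H_def)
  qed (use assms in \<open>simp add: F_def H_def zero_less_mult_iff\<close>)
  have "integrable lborel H \<longleftrightarrow> integrable lborel (\<lambda>x. k * H x)"
  proof
    assume "integrable lborel (\<lambda>x. k * H x)"
    then have "integrable lborel (\<lambda>x. inverse k * (k * H x))"
      by simp
    with \<open>k \<noteq> 0\<close> show "integrable lborel H"
      by (simp add: mult.assoc[symmetric])
  qed simp
  also have "\<dots> \<longleftrightarrow> integrable lborel F"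
    using lborel_integrable_real_affine_iff[of c F 0] assms by (simp add: FH)
  finally show "mellin_integrable (\<lambda>x. g (c * x)) s \<longleftrightarrow> mellin_integrable g s"
    unfolding mellin_integrable_def set_integrable_def F_def H_def .
  have "integral\<^sup>L lborel F = c *\<^sub>R integral\<^sup>L lborel (\<lambda>x. F (c * x))"
    using lborel_integral_real_affine[of c F 0] assms by simp
  also have "\<dots> = (complex_of_real c * k) * integral\<^sup>L lborel H"
    unfolding FH by (simp add: scaleR_conv_of_real)
  also have "complex_of_real c * k = complex_of_real c powr s"
    using assms by (simp add: k_def powr_diff)
  finally have "integral\<^sup>L lborel H = complex_of_real c powr (- s) * integral\<^sup>L lborel F"
    using assms by (simp add: powr_minus field_simps)
  then show "mellin (\<lambda>x. g (c * x)) s = complex_of_real c powr (- s) * mellin g s"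
    unfolding mellin_def set_lebesgue_integral_def F_def H_def .
qed

lemma mellin_cmult:
  shows "mellin_integrable g s \<Longrightarrow> mellin_integrable (\<lambda>x. c * g x) s"
    and "mellin (\<lambda>x. c * g x) s = c * mellin g s"
  unfolding mellin_integrable_def mellin_def
  by (simp_all add: mult.left_commute[of _ c])

lemma mellin_diff:
  assumes "mellin_integrable g s" "mellin_integrable h s"
  shows "mellin_integrable (\<lambda>x. g x - h x) s"
    and "mellin (\<lambda>x. g x - h x) s = mellin g s - mellin h s"
  using assms unfolding mellin_integrable_def mellin_def
  by (simp_all add: right_diff_distrib set_integral_diff)

lemma mellin_sum:
  assumes "\<And>i. i \<in> I \<Longrightarrow> mellin_integrable (g i) s"
  shows "mellin_integrable (\<lambda>x. \<Sum>i\<in>I. g i x) s"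
    and "mellin (\<lambda>x. \<Sum>i\<in>I. g i x) s = (\<Sum>i\<in>I. mellin (g i) s)"
proof -
  have eq: "indicator {0<..} x *\<^sub>R (complex_of_real x powr (s - 1) * (\<Sum>i\<in>I. g i x))
      = (\<Sum>i\<in>I. indicator {0<..} x *\<^sub>R (complex_of_real x powr (s - 1) * g i x))" for x
    by (simp add: sum_distrib_left scaleR_sum_right)
  show "mellin_integrable (\<lambda>x. \<Sum>i\<in>I. g i x) s"
    using assms unfolding mellin_integrable_def set_integrable_def eq
    by (intro Bochner_Integration.integrable_sum)
  show "mellin (\<lambda>x. \<Sum>i\<in>I. g i x) s = (\<Sum>i\<in>I. mellin (g i) s)"
    using assms
    unfolding mellin_integrable_def set_integrable_def mellin_def set_lebesgue_integral_def eq
    by (intro Bochner_Integration.integral_sum)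
qed

lemma set_integral_deriv_eq_zero:
  fixes F G :: "real \<Rightarrow> complex"
  assumes deriv: "\<And>y. 0 < y \<Longrightarrow> (F has_vector_derivative G y) (at y)"
    and cont: "\<And>y. 0 < y \<Longrightarrow> isCont G y"
    and "set_integrable lborel {0<..} G"
    and "(F \<longlongrightarrow> 0) (at_right 0)" "(F \<longlongrightarrow> 0) at_top"
  shows "(LINT y:{0<..}|lborel. G y) = 0"
proof -
  have "(LBINT y=0..\<infinity>. G y) = 0 - 0"
  proof (rule interval_integral_FTC_integrable)
    show "set_integrable lborel (einterval 0 \<infinity>) G"
      using assms(3) by (simp add: zero_ereal_def)
    show "((F \<circ> real_of_ereal) \<longlongrightarrow> 0) (at_right 0)"
      using assms(4) by (simp add: zero_ereal_def ereal_tendsto_simps)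
    show "((F \<circ> real_of_ereal) \<longlongrightarrow> 0) (at_left \<infinity>)"
      using assms(5) by (simp add: ereal_tendsto_simps)
  qed (use deriv cont in auto)
  then show ?thesis
    by (simp add: interval_lebesgue_integral_0_infty)
qed

section \<open>Good kernels\<close>

lemma integrable_on_atLeast_of_set_integrable:
  fixes h :: "real \<Rightarrow> 'b :: euclidean_space"
  assumes "set_integrable lborel {0<..} h"
  shows "h integrable_on {0..}"
proof -
  have "h integrable_on {0<..}"
    using set_borel_integral_eq_integral(1)[OF assms] .
  then show ?thesis
    by (rule integrable_spike_set) (auto intro: negligible_subset[of "{0}"])
qed

lemma integral_le_integral_atLeast:
  fixes h :: "real \<Rightarrow> real"
  assumes "h integrable_on {0..}" "continuous_on {0..} h" "\<And>t. 0 \<le> t \<Longrightarrow> 0 \<le> h t" "0 \<le> a"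
  shows "integral {a..b} h \<le> integral {0..} h"
  using assms
  by (intro integral_subset_le integrable_continuous_interval continuous_on_subset[OF assms(2)])
     auto

lemma sum_integral_consecutive:
  fixes h :: "real \<Rightarrow> 'a :: banach"
  assumes "mono p" "\<And>n. h integrable_on {p 0 .. p n}"
  shows "(\<Sum>n<N. integral {p n .. p (Suc n)} h) = integral {p 0 .. p N} h"
proof (induction N)
  case (Suc N)
  have "integral {p 0 .. p N} h + integral {p N .. p (Suc N)} h = integral {p 0 .. p (Suc N)} h"
    using assms by (intro Henstock_Kurzweil_Integration.integral_combine) (auto simp: monoD)
  with Suc show ?case
    by simp
qed simp

locale good_kernel_deriv =
  fixes f f' :: "real \<Rightarrow> complex"
  assumes has_deriv: "\<And>t. 0 \<le> t \<Longrightarrow> (f has_vector_derivative f' t) (at t within {0..})"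
    and deriv_continuous: "continuous_on {0..} f'"
    and moment_integrable: "set_integrable lborel {0<..} (\<lambda>t. complex_of_real t * f' t)"
    and tendsto_kernel: "(f \<longlongrightarrow> 0) at_top"
    and kernel_integrable: "set_integrable lborel {0<..} f"

lemma good_kernel_iff: "good_kernel f \<longleftrightarrow> (\<exists>f'. good_kernel_deriv f f')"
  unfolding good_kernel_def good_kernel_deriv_def by blast

context good_kernel_deriv
begin

lemma continuous_on_kernel: "continuous_on {0..} f"
  using has_deriv
  by (auto simp: continuous_on_eq_continuous_within intro: has_vector_derivative_continuous)

lemma isCont_kernel: "0 < t \<Longrightarrow> isCont f t"
  using continuous_on_kernel by (rule continuous_on_interior) auto

lemma kernel_integrable_on_interval: "0 \<le> a \<Longrightarrow> f integrable_on {a..b}"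
  by (intro integrable_continuous_interval continuous_on_subset[OF continuous_on_kernel]) auto

lemma kernel_bounded: obtains B where "\<And>t. 0 \<le> t \<Longrightarrow> norm (f t) \<le> B"
proof -
  obtain T where T: "\<And>t. T \<le> t \<Longrightarrow> norm (f t) < 1"
    using order_tendstoD(2)[OF tendsto_norm[OF tendsto_kernel], of 1]
    by (auto simp: eventually_at_top_linorder)
  have "compact (f ` {0..max T 0})"
    by (rule compact_continuous_image[OF continuous_on_subset[OF continuous_on_kernel]]) auto
  then obtain B where "\<And>t. t \<in> {0..max T 0} \<Longrightarrow> norm (f t) \<le> B"
    by (meson bounded_iff compact_imp_bounded image_eqI)
  then have "norm (f t) \<le> max 1 B" if "0 \<le> t" for t
    using T[of t] that by (cases "t \<le> max T 0") force+
  then show ?thesis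
    using that by blast
qed

lemma continuous_on_norm_deriv [continuous_intros]: "continuous_on {0..} (\<lambda>t. norm (f' t))"
  using deriv_continuous by (rule continuous_on_norm)

lemma norm_deriv_integrable_on_interval: "0 \<le> a \<Longrightarrow> (\<lambda>t. norm (f' t)) integrable_on {a..b}"
  by (intro integrable_continuous_interval continuous_on_subset[OF continuous_on_norm_deriv]) auto

lemma has_integral_deriv: "0 \<le> a \<Longrightarrow> a \<le> b \<Longrightarrow> (f' has_integral (f b - f a)) {a..b}"
  by (intro fundamental_theorem_of_calculus has_vector_derivative_within_subset[OF has_deriv]) auto

lemma norm_diff_le_integral:
  assumes "0 \<le> a" "a \<le> t" "t \<le> b"
  shows "norm (f t - f a) \<le> integral {a..b} (\<lambda>u. norm (f' u))"
proof -
  have "f t - f a = integral {a..t} f'"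
    using has_integral_deriv[of a t] assms by (simp add: integral_unique)
  also have "norm \<dots> \<le> integral {a..t} (\<lambda>u. norm (f' u))"
    using assms
    by (intro Henstock_Kurzweil_Integration.integral_norm_bound_integral
              integrable_continuous_interval norm_deriv_integrable_on_interval
              continuous_on_subset[OF deriv_continuous]) auto
  also have "\<dots> \<le> integral {a..b} (\<lambda>u. norm (f' u))"
    using assms by (intro integral_subset_le norm_deriv_integrable_on_interval) auto
  finally show ?thesis .
qed

lemma set_integrable_norm_deriv: "set_integrable lborel {0<..} (\<lambda>t. norm (f' t))"
proof -
  have "set_integrable lborel {0..1} (\<lambda>t. norm (f' t))"
    by (rule borel_integrable_atLeastAtMost')
       (auto intro: continuous_on_subset[OF continuous_on_norm_deriv])
  then have small: "set_integrable lborel {0<..1} (\<lambda>t. norm (f' t))"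
    by (rule set_integrable_subset) auto
  have large: "set_integrable lborel {1<..} (\<lambda>t. norm (f' t))"
  proof (rule set_integrable_bound[OF set_integrable_subset[OF moment_integrable]])
    show "set_borel_measurable lborel {1<..} (\<lambda>t. norm (f' t))"
      unfolding set_borel_measurable_def measurable_lborel2
      by (intro borel_measurable_continuous_on_indicator
                continuous_on_subset[OF continuous_on_norm_deriv]) auto
    show "AE t in lborel. t \<in> {1<..} \<longrightarrow> norm (norm (f' t)) \<le> norm (complex_of_real t * f' t)"
      by (intro AE_I2) (auto simp: norm_mult mult_le_cancel_right1)
  qed auto
  have "{0<..} = {0<..1} \<union> {1::real<..}"
    by auto
  with set_integrable_Un[OF small large] show ?thesis
    by simp
qed

definition variation :: real where
  "variation = integral {0..} (\<lambda>t. norm (f' t))"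

definition weighted_variation :: real where
  "weighted_variation = integral {0..} (\<lambda>t. t * norm (f' t))"

definition l1_norm :: real where
  "l1_norm = integral {0..} (\<lambda>t. norm (f t))"

lemma integral_le_variation: "0 \<le> a \<Longrightarrow> integral {a..b} (\<lambda>t. norm (f' t)) \<le> variation"
  unfolding variation_def
  by (intro integral_le_integral_atLeast integrable_on_atLeast_of_set_integrable
            set_integrable_norm_deriv continuous_on_norm_deriv) auto

lemma integral_le_weighted_variation:
  "0 \<le> a \<Longrightarrow> integral {a..b} (\<lambda>t. t * norm (f' t)) \<le> weighted_variation"
proof -
  have "set_integrable lborel {0<..} (\<lambda>t. t * norm (f' t))"
    using set_integrable_norm[OF moment_integrable]
    by (rule set_integrable_cong[THEN iffD1, OF refl refl, rotated]) (simp add: norm_mult)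
  then show "0 \<le> a \<Longrightarrow> ?thesis"
    unfolding weighted_variation_def
    by (intro integral_le_integral_atLeast integrable_on_atLeast_of_set_integrable
              continuous_intros) auto
qed

lemma integral_le_l1_norm: "0 \<le> a \<Longrightarrow> integral {a..b} (\<lambda>t. norm (f t)) \<le> l1_norm"
  unfolding l1_norm_def
  by (intro integral_le_integral_atLeast integrable_on_atLeast_of_set_integrable
            set_integrable_norm[OF kernel_integrable] continuous_on_norm continuous_on_kernel) auto

lemma mult_integral_norm_deriv_le:
  assumes "0 < x" "x \<le> a"
  shows "x * integral {a..b} (\<lambda>u. norm (f' u)) \<le> integral {a..b} (\<lambda>u. u * norm (f' u))"
proof -
  have "(\<lambda>u. u * norm (f' u)) integrable_on {a..b}"
    using assms by (intro integrable_continuous_interval continuous_intros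
                          continuous_on_subset[OF continuous_on_norm_deriv]) auto
  with assms have "integral {a..b} (\<lambda>u. x * norm (f' u)) \<le> integral {a..b} (\<lambda>u. u * norm (f' u))"
    by (intro integral_le integrable_on_mult_right norm_deriv_integrable_on_interval)
       (auto intro!: mult_right_mono)
  then show ?thesis
    by simp
qed

lemma norm_le_weighted_variation:
  assumes "0 < t"
  shows "norm (f t) \<le> weighted_variation / t"
proof -
  have "\<forall>\<^sub>F b in at_top. norm (f b - f t) \<le> weighted_variation / t"
  proof (rule eventually_at_top_linorderI)
    fix b assume "t \<le> b"
    have "t * norm (f b - f t) \<le> t * integral {t..b} (\<lambda>u. norm (f' u))"
      using norm_diff_le_integral[of t b b] assms \<open>t \<le> b\<close> by simp
    also have "\<dots> \<le> weighted_variation"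
      using mult_integral_norm_deriv_le[of t t b] integral_le_weighted_variation[of t b] assms
      by simp
    finally show "norm (f b - f t) \<le> weighted_variation / t"
      using assms by (simp add: field_simps)
  qed
  moreover have "((\<lambda>b. norm (f b - f t)) \<longlongrightarrow> norm (0 - f t)) at_top"
    by (intro tendsto_intros tendsto_kernel)
  ultimately show ?thesis
    by (intro tendsto_upperbound[of "\<lambda>b. norm (f b - f t)" _ at_top]) simp_all
qed

lemma kernel_bound:
  obtains C where "\<And>t. 0 < t \<Longrightarrow> norm (f t) \<le> C * min 1 (1 / t)"
proof -
  obtain B where B: "\<And>t. 0 \<le> t \<Longrightarrow> norm (f t) \<le> B"
    using kernel_bounded by blast
  have "norm (f t) \<le> max B weighted_variation * min 1 (1 / t)" if "0 < t" for t
  proof (cases "t \<le> 1")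
    case True
    with B[of t] that show ?thesis
      by (simp add: min_def)
  next
    case False
    have "weighted_variation / t \<le> max B weighted_variation / t"
      using that by (simp add: divide_right_mono)
    with False norm_le_weighted_variation[OF that] show ?thesis
      by (simp add: min_def)
  qed
  with that show ?thesis
    by blast
qed

definition primitive :: "real \<Rightarrow> complex" where
  "primitive y = integral {0..y} f"

lemma norm_primitive_le_l1_norm: "0 \<le> y \<Longrightarrow> norm (primitive y) \<le> l1_norm"
  unfolding primitive_def
  by (rule order.trans[OF Henstock_Kurzweil_Integration.integral_norm_bound_integral
                          integral_le_l1_norm])
     (auto intro!: kernel_integrable_on_interval integrable_continuous_interval continuous_on_norm
                   continuous_on_subset[OF continuous_on_kernel])

lemma norm_primitive_le:
  assumes "\<And>t. 0 \<le> t \<Longrightarrow> norm (f t) \<le> B" "0 \<le> y"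
  shows "norm (primitive y) \<le> B * y"
proof -
  have "norm (primitive y) \<le> integral {0..y} (\<lambda>t. B)"
    unfolding primitive_def using assms
    by (intro Henstock_Kurzweil_Integration.integral_norm_bound_integral
              kernel_integrable_on_interval) auto
  with assms(2) show ?thesis
    by (simp add: mult.commute)
qed

lemma tendsto_primitive: "(primitive \<longlongrightarrow> (LINT t:{0<..}|lborel. f t)) at_top"
proof -
  have "set_integrable lborel {0..1} f"
    by (rule borel_integrable_atLeastAtMost')
       (auto intro: continuous_on_subset[OF continuous_on_kernel])
  from set_integrable_Un[OF this kernel_integrable]
  have "set_integrable lborel ({0..1} \<union> {0<..}) f"
    by simp
  moreover have "{0..1} \<union> {0<..} = {0::real..}"
    by auto
  ultimately have "set_integrable lborel {0..} f"
    by simp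
  then have "((\<lambda>b. LINT t:{0..b}|lborel. f t) \<longlongrightarrow> (LINT t:{0..}|lborel. f t)) at_top"
    by (intro tendsto_set_lebesgue_integral_at_top) auto
  moreover have "(LINT t:{0..}|lborel. f t) = (LINT t:{0<..}|lborel. f t)"
    by (rule set_integral_discrete_difference[where X = "{0}"]) auto
  moreover have "\<forall>\<^sub>F b in at_top. (LINT t:{0..b}|lborel. f t) = primitive b"
    unfolding primitive_def
    by (intro eventually_at_top_linorderI[of 0] set_borel_integral_eq_integral(2)
              borel_integrable_atLeastAtMost' continuous_on_subset[OF continuous_on_kernel]) auto
  ultimately show ?thesis
    using tendsto_cong by fastforce
qed

lemma primitive_has_vector_derivative:
  assumes "0 < y"
  shows "(primitive has_vector_derivative f y) (at y)"
proof -
  have "(primitive has_vector_derivative f y) (at y within {0..y + 1})"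
    unfolding primitive_def[abs_def] using assms
    by (intro integral_has_vector_derivative continuous_on_subset[OF continuous_on_kernel]) auto
  moreover have "at y within {0..y + 1} = at y"
    using assms by (intro at_within_interior) auto
  ultimately show ?thesis
    by simp
qed

lemma continuous_on_primitive: "continuous_on {0<..} primitive"
  using has_vector_derivative_continuous[OF primitive_has_vector_derivative]
  by (auto intro!: continuous_at_imp_continuous_on)

definition running_avg :: "real \<Rightarrow> complex" where
  "running_avg y = complex_of_real (1 / y) * primitive y"

lemma continuous_on_running_avg: "continuous_on {0<..} running_avg"
  unfolding running_avg_def[abs_def] by (intro continuous_intros continuous_on_primitive) auto

lemma running_avg_bound:
  obtains C where "\<And>y. 0 < y \<Longrightarrow> norm (running_avg y) \<le> C * min 1 (1 / y)"
proof -
  obtain B where B: "\<And>t. 0 \<le> t \<Longrightarrow> norm (f t) \<le> B"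
    using kernel_bounded by blast
  have "norm (running_avg y) \<le> max B l1_norm * min 1 (1 / y)" if "0 < y" for y
  proof -
    have "norm (running_avg y) = norm (primitive y) / y"
      using that by (simp add: running_avg_def norm_mult norm_divide)
    moreover have "norm (primitive y) / y \<le> B" if "y \<le> 1"
      using norm_primitive_le[OF B, of y] \<open>0 < y\<close> by (simp add: divide_le_eq mult.commute)
    moreover have "norm (primitive y) / y \<le> l1_norm / y"
      using norm_primitive_le_l1_norm[of y] that by (simp add: divide_right_mono)
    moreover have "l1_norm / y \<le> max B l1_norm / y"
      using that by (simp add: divide_right_mono)
    ultimately show ?thesis
      using that by (auto simp: min_def)
  qed
  then show ?thesis
    using that by blast
qed

definition riemann_error :: "real \<Rightarrow> real \<Rightarrow> complex" where
  "riemann_error a b = of_real (b - a) * f a - integral {a..b} f"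

lemma norm_riemann_error_le:
  assumes "0 \<le> a" "a \<le> b"
  shows "norm (riemann_error a b) \<le> (b - a) * integral {a..b} (\<lambda>u. norm (f' u))"
proof -
  have "integral {a..b} (\<lambda>t. f a - f t) = integral {a..b} (\<lambda>t. f a) - integral {a..b} f"
    using assms kernel_integrable_on_interval[of a b] by (intro integral_diff) auto
  also have "integral {a..b} (\<lambda>t. f a) = of_real (b - a) * f a"
    using assms by (simp add: scaleR_conv_of_real)
  finally have "riemann_error a b = integral {a..b} (\<lambda>t. f a - f t)"
    by (simp add: riemann_error_def)
  also have "norm \<dots> \<le> integral {a..b} (\<lambda>t. integral {a..b} (\<lambda>u. norm (f' u)))"
    using assms norm_diff_le_integral[of a _ b]
    by (intro Henstock_Kurzweil_Integration.integral_norm_bound_integral integrable_diff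
              kernel_integrable_on_interval) (auto simp: norm_minus_commute)
  also have "\<dots> = (b - a) * integral {a..b} (\<lambda>u. norm (f' u))"
    using assms by simp
  finally show ?thesis .
qed

lemma sum_riemann_error:
  assumes "0 < x"
  shows "(\<Sum>n<N. riemann_error (real (Suc n) * x) (real (Suc (Suc n)) * x))
           = of_real x * (\<Sum>n<N. f (real (Suc n) * x)) - integral {x .. real (Suc N) * x} f"
proof -
  have "(\<Sum>n<N. integral {real (Suc n) * x .. real (Suc (Suc n)) * x} f)
          = integral {x .. real (Suc N) * x} f"
    using assms sum_integral_consecutive[of "\<lambda>n. real (Suc n) * x" f N]
    by (simp add: mono_def kernel_integrable_on_interval)
  moreover have "real (Suc (Suc n)) * x - real (Suc n) * x = x" for n
    by (simp add: algebra_simps)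
  ultimately show ?thesis
    by (simp add: riemann_error_def sum_subtractf sum_distrib_left)
qed

lemma sum_norm_riemann_error_le:
  assumes "0 < x"
  shows "(\<Sum>n<N. norm (riemann_error (real (Suc n) * x) (real (Suc (Suc n)) * x))) \<le> x * variation"
    and "(\<Sum>n<N. norm (riemann_error (real (Suc n) * x) (real (Suc (Suc n)) * x)))
           \<le> weighted_variation"
proof -
  let ?I = "\<lambda>n. {real (Suc n) * x .. real (Suc (Suc n)) * x}"
  have err: "norm (riemann_error (real (Suc n) * x) (real (Suc (Suc n)) * x))
               \<le> x * integral (?I n) (\<lambda>u. norm (f' u))" for n
    using assms norm_riemann_error_le[of "real (Suc n) * x" "real (Suc (Suc n)) * x"]
    by (simp add: algebra_simps)
  have sum_eq: "(\<Sum>n<N. integral (?I n) h) = integral {x .. real (Suc N) * x} h"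
    if "continuous_on {0..} h" for h :: "real \<Rightarrow> real"
    using assms sum_integral_consecutive[of "\<lambda>n. real (Suc n) * x" h N]
    by (simp add: mono_def integrable_continuous_interval continuous_on_subset[OF that])
  have "(\<Sum>n<N. norm (riemann_error (real (Suc n) * x) (real (Suc (Suc n)) * x)))
          \<le> (\<Sum>n<N. x * integral (?I n) (\<lambda>u. norm (f' u)))"
    by (intro sum_mono err)
  also have "\<dots> = x * integral {x .. real (Suc N) * x} (\<lambda>u. norm (f' u))"
    by (simp only: sum_distrib_left[symmetric] sum_eq[OF continuous_on_norm_deriv])
  also have "\<dots> \<le> x * variation"
    using assms integral_le_variation[of x] by simp
  finally show "(\<Sum>n<N. norm (riemann_error (real (Suc n) * x) (real (Suc (Suc n)) * x)))
                  \<le> x * variation" .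
  have "(\<Sum>n<N. norm (riemann_error (real (Suc n) * x) (real (Suc (Suc n)) * x)))
          \<le> (\<Sum>n<N. integral (?I n) (\<lambda>u. u * norm (f' u)))"
    using assms by (intro sum_mono order.trans[OF err mult_integral_norm_deriv_le]) auto
  also have "\<dots> = integral {x .. real (Suc N) * x} (\<lambda>u. u * norm (f' u))"
    by (intro sum_eq continuous_intros)
  also have "\<dots> \<le> weighted_variation"
    using assms integral_le_weighted_variation[of x] by simp
  finally show "(\<Sum>n<N. norm (riemann_error (real (Suc n) * x) (real (Suc (Suc n)) * x)))
                  \<le> weighted_variation" .
qed

definition partial_P :: "nat \<Rightarrow> real \<Rightarrow> complex" where
  "partial_P N x =
     (\<Sum>n<N. f (real (Suc n) * x)) - complex_of_real (1 / x) * primitive (real (Suc N) * x)"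

lemma mult_partial_P:
  assumes "0 < x"
  shows "of_real x * partial_P N x
           = (\<Sum>n<N. riemann_error (real (Suc n) * x) (real (Suc (Suc n)) * x)) - primitive x"
proof -
  have "primitive (real (Suc N) * x) = primitive x + integral {x .. real (Suc N) * x} f"
    unfolding primitive_def using assms
    by (subst Henstock_Kurzweil_Integration.integral_combine[symmetric, of 0 x])
       (auto intro: kernel_integrable_on_interval)
  with assms show ?thesis
    unfolding sum_riemann_error[OF assms] by (simp add: partial_P_def algebra_simps)
qed

lemma partial_P_eq_running_avg:
  "partial_P N x
     = (\<Sum>n<N. f (real (Suc n) * x)) - of_real (real (Suc N)) * running_avg (real (Suc N) * x)"
proof -
  have "1 / x = real (Suc N) * (1 / (real (Suc N) * x))"
    by simp
  then have "complex_of_real (1 / x)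
               = of_real (real (Suc N)) * complex_of_real (1 / (real (Suc N) * x))"
    by (metis of_real_mult)
  then show ?thesis
    unfolding partial_P_def running_avg_def by (simp only: mult.assoc)
qed

lemma continuous_on_partial_P: "continuous_on {0<..} (partial_P N)"
  unfolding partial_P_def[abs_def]
  by (intro continuous_intros continuous_on_compose2[OF continuous_on_kernel]
            continuous_on_compose2[OF continuous_on_primitive]) auto

lemma partial_P_bound:
  obtains C where "\<And>N x. 0 < x \<Longrightarrow> norm (partial_P N x) \<le> C * min 1 (1 / x)"
proof -
  obtain B where B: "\<And>t. 0 \<le> t \<Longrightarrow> norm (f t) \<le> B"
    using kernel_bounded by blast
  define C where "C = variation + B + weighted_variation + l1_norm"
  have "0 \<le> B"
    using B[of 0] norm_ge_zero[of "f 0"] by linarith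
  moreover have "0 \<le> variation" "0 \<le> weighted_variation" "0 \<le> l1_norm"
    using integral_le_variation[of 0 0] integral_le_weighted_variation[of 0 0]
      integral_le_l1_norm[of 0 0]
    by simp_all
  ultimately have nonneg: "0 \<le> variation" "0 \<le> B" "0 \<le> weighted_variation" "0 \<le> l1_norm"
    by simp_all
  have "norm (partial_P N x) \<le> C * min 1 (1 / x)" if "0 < x" for N x
  proof -
    let ?E = "\<Sum>n<N. riemann_error (real (Suc n) * x) (real (Suc (Suc n)) * x)"
    have "x * norm (partial_P N x) = norm (?E - primitive x)"
      using mult_partial_P[OF that, of N, symmetric] that by (simp add: norm_mult)
    also have "\<dots> \<le> (\<Sum>n<N. norm (riemann_error (real (Suc n) * x) (real (Suc (Suc n)) * x)))
                     + norm (primitive x)"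
      by (rule order_trans[OF norm_triangle_ineq4 add_right_mono[OF norm_sum]])
    finally have "x * norm (partial_P N x)
        \<le> (\<Sum>n<N. norm (riemann_error (real (Suc n) * x) (real (Suc (Suc n)) * x)))
             + norm (primitive x)" .
    then have small: "x * norm (partial_P N x) \<le> x * (variation + B)"
      and large: "x * norm (partial_P N x) \<le> weighted_variation + l1_norm"
      using sum_norm_riemann_error_le[OF that, of N] norm_primitive_le[OF B, of x]
        norm_primitive_le_l1_norm[of x] that
      by (simp_all add: algebra_simps)
    show ?thesis
    proof (cases "x \<le> 1")
      case True
      with small that nonneg show ?thesis
        by (simp add: C_def min_def)
    next
      case False
      with large that nonneg show ?thesis
        by (simp add: C_def min_def field_simps)
    qed
  qed
  with that show ?thesis
    by blast
qed

lemma partial_P_tendsto: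
  assumes "0 < x"
  shows "summable (\<lambda>n. f (real (Suc n) * x))" and "(\<lambda>N. partial_P N x) \<longlonglongrightarrow> Pop f x"
proof -
  define e where "e n = riemann_error (real (Suc n) * x) (real (Suc (Suc n)) * x)" for n
  define p where "p = complex_of_real (1 / x) * (suminf e - primitive x)"
  have "summable (\<lambda>n. norm (e n))"
    unfolding e_def using sum_norm_riemann_error_le(1)[OF assms]
    by (intro summableI_nonneg_bounded) auto
  then have "(\<lambda>N. \<Sum>n<N. e n) \<longlonglongrightarrow> suminf e"
    by (rule summable_LIMSEQ[OF summable_norm_cancel])
  then have "(\<lambda>N. complex_of_real (1 / x) * ((\<Sum>n<N. e n) - primitive x)) \<longlonglongrightarrow> p"
    unfolding p_def by (intro tendsto_intros)
  moreover have "complex_of_real (1 / x) * ((\<Sum>n<N. e n) - primitive x) = partial_P N x" for N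
    using mult_partial_P[OF assms, of N] assms unfolding e_def by (simp add: field_simps)
  ultimately have P_lim: "(\<lambda>N. partial_P N x) \<longlonglongrightarrow> p"
    by simp
  have "filterlim (\<lambda>N. real (Suc N)) at_top sequentially"
    by (rule filterlim_compose[OF filterlim_real_sequentially filterlim_Suc])
  then have "filterlim (\<lambda>N. real (Suc N) * x) at_top sequentially"
    using filterlim_at_top_mult_tendsto_pos[OF tendsto_const assms] by blast
  then have "(\<lambda>N. partial_P N x + complex_of_real (1 / x) * primitive (real (Suc N) * x))
               \<longlonglongrightarrow> p + complex_of_real (1 / x) * (LINT t:{0<..}|lborel. f t)"
    by (intro tendsto_intros P_lim) (rule filterlim_compose[OF tendsto_primitive])
  then have sums: "(\<lambda>n. f (real (Suc n) * x))
                     sums (p + complex_of_real (1 / x) * (LINT t:{0<..}|lborel. f t))"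
    by (simp add: sums_def partial_P_def)
  then show "summable (\<lambda>n. f (real (Suc n) * x))"
    by (rule sums_summable)
  have "Pop f x = p"
    using sums by (simp add: Pop_def sums_iff)
  with P_lim show "(\<lambda>N. partial_P N x) \<longlonglongrightarrow> Pop f x"
    by simp
qed

context
  fixes s :: complex
  assumes s: "0 < Re s" "Re s < 1"
begin

lemma mellin_integrable_kernel: "mellin_integrable f s"
proof -
  obtain C where "\<And>t. 0 < t \<Longrightarrow> norm (f t) \<le> C * min 1 (1 / t)"
    using kernel_bound by blast
  with s show ?thesis
    by (intro mellin_integrable_of_bound continuous_on_subset[OF continuous_on_kernel]) auto
qed

lemma mellin_integrable_running_avg: "mellin_integrable running_avg s"
proof -
  obtain C where "\<And>y. 0 < y \<Longrightarrow> norm (running_avg y) \<le> C * min 1 (1 / y)"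
    using running_avg_bound by blast
  with s show ?thesis
    by (intro mellin_integrable_of_bound continuous_on_running_avg) auto
qed

lemma mellin_running_avg: "mellin running_avg s = mellin f s / (1 - s)"
proof -
  obtain B where B: "\<And>t. 0 \<le> t \<Longrightarrow> norm (f t) \<le> B"
    using kernel_bounded by blast
  define F where "F y = complex_of_real y powr (s - 1) * primitive y" for y
  define G where "G y = (s - 1) * (complex_of_real y powr (s - 1) * running_avg y)
                          + complex_of_real y powr (s - 1) * f y" for y
  have "(LINT y:{0<..}|lborel. G y) = 0"
  proof (rule set_integral_deriv_eq_zero)
    fix y :: real assume "0 < y"
    then have "complex_of_real y \<notin> \<real>\<^sub>\<le>\<^sub>0"
      by (simp add: complex_nonpos_Reals_iff)
    have "((\<lambda>x. complex_of_real x powr (s - 1))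
            has_vector_derivative (s - 1) * complex_of_real y powr (s - 1 - 1)) (at y)"
      using has_vector_derivative_real_field[OF has_field_derivative_powr[OF
              \<open>complex_of_real y \<notin> \<real>\<^sub>\<le>\<^sub>0\<close>, where s = "s - 1"], where s = UNIV]
      by simp
    from has_vector_derivative_mult[OF this primitive_has_vector_derivative[OF \<open>0 < y\<close>]]
    have der: "(F has_vector_derivative complex_of_real y powr (s - 1) * f y
                 + (s - 1) * complex_of_real y powr (s - 1 - 1) * primitive y) (at y)"
      unfolding F_def[abs_def] .
    have pow: "complex_of_real y powr (s - 1 - 1)
                 = complex_of_real y powr (s - 1) / complex_of_real y"
      using \<open>0 < y\<close> by (simp add: powr_diff power2_eq_square)
    have "complex_of_real y powr (s - 1) * f y
            + (s - 1) * complex_of_real y powr (s - 1 - 1) * primitive y = G y"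
      unfolding pow G_def running_avg_def using \<open>0 < y\<close> by (simp add: field_simps)
    with der show "(F has_vector_derivative G y) (at y)"
      by simp
    have "isCont primitive y"
      using has_vector_derivative_continuous[OF primitive_has_vector_derivative[OF \<open>0 < y\<close>]] .
    with \<open>0 < y\<close> \<open>complex_of_real y \<notin> \<real>\<^sub>\<le>\<^sub>0\<close> show "isCont G y"
      unfolding G_def running_avg_def by (intro continuous_intros isCont_kernel) auto
  next
    have "set_integrable lborel {0<..}
            (\<lambda>y. (s - 1) * (complex_of_real y powr (s - 1) * running_avg y))"
      using mellin_integrable_running_avg unfolding mellin_integrable_def
      by (rule set_integrable_mult_right)
    then show "set_integrable lborel {0<..} G"
      using mellin_integrable_kernel unfolding G_def mellin_integrable_def
      by (rule set_integral_add(1))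
  next
    have "norm (F y) \<le> B * y powr Re s" if "0 < y" for y
    proof -
      have "norm (F y) = y powr (Re s - 1) * norm (primitive y)"
        unfolding F_def using that by (simp add: norm_mult norm_of_real_powr)
      also have "\<dots> \<le> y powr (Re s - 1) * (B * y)"
        using norm_primitive_le[OF B, of y] that by (intro mult_left_mono) auto
      also have "\<dots> = B * y powr Re s"
        using that by (simp add: powr_diff)
      finally show ?thesis .
    qed
    then have "\<forall>\<^sub>F y in at_right 0. norm (F y) \<le> B * y powr Re s"
      by (rule eventually_mono[OF eventually_at_right_less[of "0::real"]])
    moreover have "\<forall>\<^sub>F y in at_right 0. 0 \<le> (y :: real)"
      by (rule eventually_mono[OF eventually_at_right_less[of "0::real"]]) simp
    with s have "((\<lambda>y. y powr Re s) \<longlongrightarrow> 0) (at_right 0)"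
      by (intro tendsto_zero_powrI[OF tendsto_ident_at tendsto_const]) auto
    then have "((\<lambda>y. B * y powr Re s) \<longlongrightarrow> 0) (at_right 0)"
      by (rule tendsto_mult_right_zero)
    ultimately show "(F \<longlongrightarrow> 0) (at_right 0)"
      by (rule Lim_null_comparison)
  next
    have "norm (F y) \<le> l1_norm * y powr (Re s - 1)" if "0 < y" for y
    proof -
      have "norm (F y) = y powr (Re s - 1) * norm (primitive y)"
        unfolding F_def using that by (simp add: norm_mult norm_of_real_powr)
      also have "\<dots> \<le> y powr (Re s - 1) * l1_norm"
        using norm_primitive_le_l1_norm[of y] that by (intro mult_left_mono) auto
      finally show ?thesis
        by (simp add: mult.commute)
    qed
    then have "\<forall>\<^sub>F y in at_top. norm (F y) \<le> l1_norm * y powr (Re s - 1)"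
      by (rule eventually_mono[OF eventually_gt_at_top[of "0::real"]])
    moreover have "((\<lambda>y. y powr (Re s - 1)) \<longlongrightarrow> 0) at_top"
      using s by (intro tendsto_neg_powr[OF _ filterlim_ident]) simp
    then have "((\<lambda>y. l1_norm * y powr (Re s - 1)) \<longlongrightarrow> 0) at_top"
      by (rule tendsto_mult_right_zero)
    ultimately show "(F \<longlongrightarrow> 0) at_top"
      by (rule Lim_null_comparison)
  qed
  moreover have "(LINT y:{0<..}|lborel. G y) = (s - 1) * mellin running_avg s + mellin f s"
    using mellin_integrable_kernel mellin_integrable_running_avg
    unfolding G_def mellin_def mellin_integrable_def by (simp add: set_integral_add)
  moreover have "1 - s \<noteq> 0"
    using s by auto
  ultimately show ?thesis
    by (simp add: field_simps)
qed

lemma mellin_partial_P: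
  "mellin (partial_P N) s
     = ((\<Sum>n<N. of_nat (Suc n) powr (- s)) - of_nat (N + 1) powr (1 - s) / (1 - s)) * mellin f s"
proof -
  define M where "M = real (Suc N)"
  define S where "S x = (\<Sum>n<N. f (real (Suc n) * x))" for x
  define A where "A x = of_real M * running_avg (M * x)" for x
  have scaled_f: "mellin_integrable (\<lambda>x. f (real (Suc n) * x)) s"
    "mellin (\<lambda>x. f (real (Suc n) * x)) s = of_nat (Suc n) powr (- s) * mellin f s" for n
    using mellin_scale[of "real (Suc n)" f s] mellin_integrable_kernel by simp_all
  have S: "mellin_integrable S s" "mellin S s = (\<Sum>n<N. of_nat (Suc n) powr (- s) * mellin f s)"
    unfolding S_def[abs_def] using mellin_sum[of "{..<N}" "\<lambda>n x. f (real (Suc n) * x)" s] scaled_f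
    by simp_all
  have A: "mellin_integrable A s"
    "mellin A s = of_real M * of_real M powr (- s) * (mellin f s / (1 - s))"
    unfolding A_def[abs_def]
    using mellin_scale[of M running_avg s] mellin_integrable_running_avg
      mellin_cmult[where c = "of_real M"]
    by (simp_all add: M_def mellin_running_avg)
  have "partial_P N = (\<lambda>x. S x - A x)"
    by (simp add: S_def A_def M_def partial_P_eq_running_avg[abs_def])
  then have "mellin (partial_P N) s = mellin S s - mellin A s"
    using mellin_diff(2)[OF S(1) A(1)] by simp
  moreover have "of_real M * of_real M powr (- s) = (of_nat (N + 1) powr (1 - s) :: complex)"
    by (simp add: M_def powr_diff powr_minus field_simps)
  ultimately show ?thesis
    unfolding S(2) A(2) by (simp add: sum_distrib_right left_diff_distrib)
qed

theorem mellin_Pop: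
  shows "mellin_integrable (Pop f) s" and "zeta s * mellin f s = mellin (Pop f) s"
proof -
  obtain C where C: "\<And>N x. 0 < x \<Longrightarrow> norm (partial_P N x) \<le> C * min 1 (1 / x)"
    using partial_P_bound by blast
  show "mellin_integrable (Pop f) s"
    using mellin_dominated_convergence(1)[OF s continuous_on_partial_P C partial_P_tendsto(2)] .
  have "(\<lambda>N. mellin (partial_P N) s) \<longlonglongrightarrow> zeta s * mellin f s"
    unfolding mellin_partial_P by (rule tendsto_mult_right[OF tendsto_zeta]) (use s in auto)
  moreover have "(\<lambda>N. mellin (partial_P N) s) \<longlonglongrightarrow> mellin (Pop f) s"
    using mellin_dominated_convergence(2)[OF s continuous_on_partial_P C partial_P_tendsto(2)] .
  ultimately show "zeta s * mellin f s = mellin (Pop f) s"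
    by (rule LIMSEQ_unique)
qed

end

end

theorem mainTheorem10:
  fixes f :: "real \<Rightarrow> complex" and s :: complex
  assumes "good_kernel f"
    and "0 < Re s" and "Re s < 1"
  shows "(AE x in lborel. 0 < x \<longrightarrow> summable (\<lambda>n. f (real (Suc n) * x)))
       \<and> set_integrable lborel {0<..} (\<lambda>t. complex_of_real t powr (s - 1) * f t)
       \<and> set_integrable lborel {0<..} (\<lambda>x. complex_of_real x powr (s - 1) * Pop f x)
       \<and> zeta s * mellin f s = mellin (Pop f) s"
proof -
  obtain f' where "good_kernel_deriv f f'"
    using assms(1) good_kernel_iff by blast
  then interpret good_kernel_deriv f f' .
  show ?thesis
    using partial_P_tendsto(1) mellin_integrable_kernel[OF assms(2,3)] mellin_Pop[OF assms(2,3)]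
    by (auto simp: mellin_integrable_def intro: AE_I2)
qed

end
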